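(* Let $E$ be a finite set with $m=|E|\ge1$ and let $\mu$ be an exchangeable measure over the subsets of $E$, i.e. $\mu(F)=c(|F|)$ for some non-negative numbers $c(0),\dots,c(m)$. Then $\mu$ is cavity-monotone if and only if (1) $c$ is log-concave, i.e. $c(k)^2\ge c(k-1)c(k+1)$ for all $0<k<m$, and (2) the support $\{0\le k\le m: c(k)>0\}$ is an interval containing $0$ and $1$. In particular, for every $b\ge1$ the measure $\mu(F)=\mathbf 1(|F|\le b)$ is cavity-monotone.
   Context: Let $E$ be a finite set. A measure over the subsets of $E$ is a function $\mu:2^E\to[0,\infty)$. For $\mathbf w\in(0,\infty)^E$, $\mathbb P^{\mathbf w}_\mu$ is the law of a random subset $\mathcal F\subseteq E$ with $\mathbb P^{\mathbf w}_\mu(\mathcal F=F)=\mu(F)\prod_{e\in F}w_e/Z(\mathbf w)$, where $Z(\mathbf w)=\sum_{F}\mu(F)\prod_{e\in F}w_e$. $\mu$ is Rayleigh if for all $\mathbf w\in(0,\infty)^E$ and all $e\neq f$ in $E$, $\mathbb P^{\mathbf w}_\mu(e\in\mathcal F,f\in\mathcal F)\le\mathbb P^{\mathbf w}_\mu(e\in\mathcal F)\mathbb P^{\mathbf w}_\mu(f\in\mathcal F)$. $\mu$ is size-increasing if for all $\mathbf w\in(0,\infty)^E$ and all $e\in E$, $\mathbb E^{\mathbf w}_\mu[|\mathcal F|\mathbf 1_{e\in\mathcal F}]>\mathbb E^{\mathbf w}_\mu[|\mathcal F|]\,\mathbb P^{\mathbf w}_\mu(e\in\mathcal F)$. $\mu$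 is cavity-monotone if $\mu(\emptyset)>0$ and $\mu$ is Rayleigh and size-increasing. *)

theory Defs
  imports Complex_Main
begin

text \<open>Measures over subsets of a finite ground set E are functions mu :: 'a set => real
  (only the values on subsets of E matter). Weights w :: 'a => real, required positive on E.\<close>

definition wt :: "('a set \<Rightarrow> real) \<Rightarrow> ('a \<Rightarrow> real) \<Rightarrow> 'a set \<Rightarrow> real" where
  "wt mu w F = mu F * (\<Prod>e\<in>F. w e)"

definition Zfun :: "'a set \<Rightarrow> ('a set \<Rightarrow> real) \<Rightarrow> ('a \<Rightarrow> real) \<Rightarrow> real" where
  "Zfun E mu w = (\<Sum>F\<in>Pow E. wt mu w F)"

definition Ew :: "'a set \<Rightarrow> ('a set \<Rightarrow> real) \<Rightarrow> ('a \<Rightarrow> real) \<Rightarrow> ('a set \<Rightarrow> real) \<Rightarrow> real" where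
  "Ew E mu w g = (\<Sum>F\<in>Pow E. g F * wt mu w F) / Zfun E mu w"

definition Pw :: "'a set \<Rightarrow> ('a set \<Rightarrow> real) \<Rightarrow> ('a \<Rightarrow> real) \<Rightarrow> ('a set \<Rightarrow> bool) \<Rightarrow> real" where
  "Pw E mu w A = (\<Sum>F\<in>{F\<in>Pow E. A F}. wt mu w F) / Zfun E mu w"

definition rayleigh :: "'a set \<Rightarrow> ('a set \<Rightarrow> real) \<Rightarrow> bool" where
  "rayleigh E mu \<longleftrightarrow>
     (\<forall>w. (\<forall>e\<in>E. w e > 0) \<longrightarrow>
        (\<forall>e\<in>E. \<forall>f\<in>E. e \<noteq> f \<longrightarrow>
           Pw E mu w (\<lambda>F. e \<in> F \<and> f \<in> F) \<le> Pw E mu w (\<lambda>F. e \<in> F) * Pw E mu w (\<lambda>F. f \<in> F)))"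

definition size_increasing :: "'a set \<Rightarrow> ('a set \<Rightarrow> real) \<Rightarrow> bool" where
  "size_increasing E mu \<longleftrightarrow>
     (\<forall>w. (\<forall>e\<in>E. w e > 0) \<longrightarrow>
        (\<forall>e\<in>E. Ew E mu w (\<lambda>F. real (card F) * (if e \<in> F then 1 else 0))
                 > Ew E mu w (\<lambda>F. real (card F)) * Pw E mu w (\<lambda>F. e \<in> F)))"

definition cavity_monotone :: "'a set \<Rightarrow> ('a set \<Rightarrow> real) \<Rightarrow> bool" where
  "cavity_monotone E mu \<longleftrightarrow> mu {} > 0 \<and> rayleigh E mu \<and> size_increasing E mu"

end

theory Submission
  imports Defs
begin

(* For an exchangeable measure every quantity in the definitions reduces to the shifted partition
   functions P_j(R) = (sum over F \<subseteq> R of c(|F| + j) w^F). On R = E - {e, f} the Rayleigh inequality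
   for e, f reads P_0 P_2 \<le> P_1^2, and on R = E - {e} size increase at e reads P'_0 P_1 < P_0 P'_1,
   where P' is built from the size-biased profile k c(k).

   Adding an element x to R replaces P_j by P_j + w_x P_(j+1). This preserves log-concavity (for
   sequences without internal zeros) as well as the bound P'_(j+d) P_j - P'_j P_(j+d) \<ge> d c(j) c(j+d),
   which gives cavity-monotonicity when c is log-concave with c(0), c(1) > 0.

   Conversely, weights x^(-A) on an n-subset of R and x elsewhere turn x^(A n) P_j into a polynomial
   in x with value c(n + j) at 0, so letting x \<rightarrow> 0 in P_0 P_2 \<le> P_1^2 yields log-concavity of c;
   taking A longer than a run of zeros of c rules out internal zeros, and size increase forces
   c(1) > 0. *)

section \<open>Exchangeable measures and shifted partition functions\<close>

definition exchangeable :: "'a set \<Rightarrow> ('a set \<Rightarrow> real) \<Rightarrow> (nat \<Rightarrow> real) \<Rightarrow> bool" where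
  "exchangeable E mu c \<longleftrightarrow> (\<forall>F\<subseteq>E. mu F = c (card F))"

definition shifted_partition :: "(nat \<Rightarrow> real) \<Rightarrow> ('a \<Rightarrow> real) \<Rightarrow> 'a set \<Rightarrow> nat \<Rightarrow> real" where
  "shifted_partition c w R j = (\<Sum>F\<in>Pow R. c (card F + j) * prod w F)"

definition rayleigh_profile :: "(nat \<Rightarrow> real) \<Rightarrow> 'a set \<Rightarrow> bool" where
  "rayleigh_profile c R \<longleftrightarrow> (\<forall>w. (\<forall>r\<in>R. 0 < w r) \<longrightarrow>
     shifted_partition c w R 0 * shifted_partition c w R 2 \<le> (shifted_partition c w R 1)\<^sup>2)"

definition size_biased :: "(nat \<Rightarrow> real) \<Rightarrow> nat \<Rightarrow> real" where
  "size_biased c k = real k * c k"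

lemma shifted_partition_empty [simp]: "shifted_partition c w {} j = c j"
  by (simp add: shifted_partition_def)

lemma shifted_partition_cong:
  assumes "\<And>r. r \<in> R \<Longrightarrow> w r = v r"
  shows "shifted_partition c w R j = shifted_partition c v R j"
proof -
  have prod_eq: "prod w F = prod v F" if "F \<subseteq> R" for F
    using that assms by (intro prod.cong) auto
  show ?thesis
    unfolding shifted_partition_def by (intro sum.cong refl) (simp add: prod_eq)
qed

lemma sum_Pow_insert:
  assumes "finite R" "x \<notin> R"
  shows "(\<Sum>F\<in>Pow (insert x R). h F) = (\<Sum>F\<in>Pow R. h F + h (insert x F))"
proof -
  have "inj_on (insert x) (Pow R)"
    using assms(2) by (intro inj_onI) (metis Pow_iff insert_ident subset_iff)
  then have "(\<Sum>F\<in>insert x ` Pow R. h F) = (\<Sum>F\<in>Pow R. h (insert x F))"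
    by (simp add: sum.reindex)
  moreover have "(\<Sum>F\<in>Pow (insert x R). h F) = (\<Sum>F\<in>Pow R. h F) + (\<Sum>F\<in>insert x ` Pow R. h F)"
    unfolding Pow_insert using assms by (intro sum.union_disjoint) auto
  ultimately show ?thesis by (simp add: sum.distrib)
qed

lemma shifted_partition_insert:
  assumes "finite R" "x \<notin> R"
  shows "shifted_partition c w (insert x R) j
           = shifted_partition c w R j + w x * shifted_partition c w R (Suc j)"
proof -
  have "c (card (insert x F) + j) * prod w (insert x F) = w x * (c (card F + Suc j) * prod w F)"
    if "F \<in> Pow R" for F
  proof -
    have "finite F" "x \<notin> F" using that assms by (auto intro: finite_subset)
    then show ?thesis by simp
  qed
  then show ?thesis
    unfolding shifted_partition_def sum_Pow_insert[OF assms] sum.distrib sum_distrib_left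
    by simp
qed

lemma sum_Pow_supersets:
  assumes "finite E" "G \<subseteq> E"
  shows "(\<Sum>F\<in>{F \<in> Pow E. G \<subseteq> F}. h F) = (\<Sum>F\<in>Pow (E - G). h (F \<union> G))"
  by (rule sum.reindex_bij_witness[where i = "\<lambda>F. F \<union> G" and j = "\<lambda>F. F - G"])
    (use assms in \<open>auto simp: Un_absorb2\<close>)

lemma sum_wt_supersets:
  assumes "exchangeable E mu c" "finite E" "G \<subseteq> E"
  shows "(\<Sum>F\<in>{F \<in> Pow E. G \<subseteq> F}. wt mu w F)
           = prod w G * shifted_partition c w (E - G) (card G)"
proof -
  have "wt mu w (F \<union> G) = prod w G * (c (card F + card G) * prod w F)" if "F \<in> Pow (E - G)" for F
  proof -
    have "finite F" "finite G" "F \<inter> G = {}" "F \<union> G \<subseteq> E"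
      using that assms(2,3) by (auto intro: finite_subset)
    then show ?thesis
      using assms(1) by (simp add: wt_def exchangeable_def card_Un_disjoint prod.union_disjoint)
  qed
  then show ?thesis
    unfolding sum_Pow_supersets[OF assms(2,3)] shifted_partition_def sum_distrib_left by simp
qed

lemma exchangeable_size_biased:
  "exchangeable E mu c \<Longrightarrow> exchangeable E (\<lambda>F. real (card F) * mu F) (size_biased c)"
  by (simp add: exchangeable_def size_biased_def)

lemma sign_of_scaled_diff:
  fixes x y k d :: real
  assumes "y - x = k * d" "0 < k"
  shows "x \<le> y \<longleftrightarrow> 0 \<le> d" "x < y \<longleftrightarrow> 0 < d"
proof -
  have "x \<le> y \<longleftrightarrow> 0 \<le> k * d" "x < y \<longleftrightarrow> 0 < k * d"
    by (simp_all flip: assms(1))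
  then show "x \<le> y \<longleftrightarrow> 0 \<le> d" "x < y \<longleftrightarrow> 0 < d"
    using assms(2) by (simp_all add: zero_le_mult_iff zero_less_mult_iff)
qed

lemma pair_covariance_identity:
  fixes x y Z a0 a1 a2 :: real
  assumes "Z = a0 + y * a1 + x * (a1 + y * a2)" "Z \<noteq> 0"
  shows "x * (a1 + y * a2) / Z * (y * (a1 + x * a2) / Z) - x * y * a2 / Z
           = x * y * ((a1)\<^sup>2 - a0 * a2) / Z\<^sup>2"
proof -
  have "x * (a1 + y * a2) / Z * (y * (a1 + x * a2) / Z) - x * y * a2 / Z
          = (x * (a1 + y * a2) * (y * (a1 + x * a2)) - x * y * a2 * Z) / Z\<^sup>2"
    using assms(2) by (simp add: field_simps power2_eq_square)
  also have "x * (a1 + y * a2) * (y * (a1 + x * a2)) - x * y * a2 * Z = x * y * ((a1)\<^sup>2 - a0 * a2)"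
    unfolding assms(1) by (simp add: algebra_simps power2_eq_square)
  finally show ?thesis .
qed

lemma size_covariance_identity:
  fixes x Z a0 a1 b0 b1 :: real
  assumes "Z = a0 + x * a1" "Z \<noteq> 0"
  shows "x * b1 / Z - (b0 + x * b1) / Z * (x * a1 / Z) = x * (a0 * b1 - b0 * a1) / Z\<^sup>2"
proof -
  have "x * b1 / Z - (b0 + x * b1) / Z * (x * a1 / Z) = (x * b1 * Z - (b0 + x * b1) * (x * a1)) / Z\<^sup>2"
    using assms(2) by (simp add: field_simps power2_eq_square)
  also have "x * b1 * Z - (b0 + x * b1) * (x * a1) = x * (a0 * b1 - b0 * a1)"
    unfolding assms(1) by (simp add: algebra_simps)
  finally show ?thesis .
qed

context
  fixes E :: "'a set" and mu :: "'a set \<Rightarrow> real" and c :: "nat \<Rightarrow> real"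
  assumes exch: "exchangeable E mu c" and fin: "finite E"
begin

lemma Zfun_exchangeable: "Zfun E mu w = shifted_partition c w E 0"
  using sum_wt_supersets[OF exch fin, of "{}" w] by (simp add: Zfun_def Pow_def)

lemma Zfun_pos:
  assumes "\<forall>k. 0 \<le> c k" "0 < c 0" "\<forall>r\<in>E. 0 < w r"
  shows "0 < Zfun E mu w"
proof -
  have "Zfun E mu w = c 0 + (\<Sum>F\<in>Pow E - {{}}. c (card F) * prod w F)"
    using fin by (simp add: Zfun_exchangeable shifted_partition_def sum.remove[of "Pow E" "{}"])
  moreover have "0 \<le> (\<Sum>F\<in>Pow E - {{}}. c (card F) * prod w F)"
    using assms(1,3) by (intro sum_nonneg mult_nonneg_nonneg prod_nonneg) (auto intro: less_imp_le)
  ultimately show ?thesis using assms(2) by linarith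
qed

lemma Pw_mem_exchangeable:
  assumes "e \<in> E"
  shows "Pw E mu w (\<lambda>F. e \<in> F) = w e * shifted_partition c w (E - {e}) 1 / Zfun E mu w"
  using sum_wt_supersets[OF exch fin, of "{e}" w] assms by (simp add: Pw_def)

lemma Pw_mem2_exchangeable:
  assumes "e \<in> E" "f \<in> E" "e \<noteq> f"
  shows "Pw E mu w (\<lambda>F. e \<in> F \<and> f \<in> F)
           = w e * w f * shifted_partition c w (E - {e, f}) 2 / Zfun E mu w"
  using sum_wt_supersets[OF exch fin, of "{e, f}" w] assms by (simp add: Pw_def numeral_2_eq_2)

lemma Ew_card_exchangeable:
  "Ew E mu w (\<lambda>F. real (card F)) = shifted_partition (size_biased c) w E 0 / Zfun E mu w"
  using sum_wt_supersets[OF exchangeable_size_biased[OF exch] fin, of "{}" w]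
  by (simp add: Ew_def wt_def mult.assoc Pow_def)

lemma Ew_card_mem_exchangeable:
  assumes "e \<in> E"
  shows "Ew E mu w (\<lambda>F. real (card F) * (if e \<in> F then 1 else 0))
           = w e * shifted_partition (size_biased c) w (E - {e}) 1 / Zfun E mu w"
proof -
  have "(\<Sum>F\<in>Pow E. real (card F) * (if e \<in> F then 1 else 0) * wt mu w F)
          = (\<Sum>F\<in>{F \<in> Pow E. {e} \<subseteq> F}. wt (\<lambda>F. real (card F) * mu F) w F)"
    unfolding sum.inter_filter[OF finite_Pow_iff[THEN iffD2, OF fin]]
    by (intro sum.cong) (auto simp: wt_def)
  then show ?thesis
    using sum_wt_supersets[OF exchangeable_size_biased[OF exch] fin, of "{e}" w] assms
    by (simp add: Ew_def)
qed

lemma Pw_pair_le_iff: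
  assumes "e \<in> E" "f \<in> E" "e \<noteq> f" "0 < w e" "0 < w f" "0 < Zfun E mu w"
  shows "Pw E mu w (\<lambda>F. e \<in> F \<and> f \<in> F) \<le> Pw E mu w (\<lambda>F. e \<in> F) * Pw E mu w (\<lambda>F. f \<in> F)
     \<longleftrightarrow> shifted_partition c w (E - {e, f}) 0 * shifted_partition c w (E - {e, f}) 2
           \<le> (shifted_partition c w (E - {e, f}) 1)\<^sup>2"
proof -
  define R where "R = E - {e, f}"
  define a where "a j = shifted_partition c w R j" for j
  have R: "finite R" "e \<notin> R" "f \<notin> R" "E - {e} = insert f R" "E - {f} = insert e R"
    "E = insert e (insert f R)"
    using fin assms(1-3) by (auto simp: R_def)
  have Pe: "shifted_partition c w (E - {e}) 1 = a 1 + w f * a 2"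
    and Pf: "shifted_partition c w (E - {f}) 1 = a 1 + w e * a 2"
    using R by (simp_all add: a_def shifted_partition_insert numeral_2_eq_2)
  have Z: "Zfun E mu w = a 0 + w f * a 1 + w e * (a 1 + w f * a 2)"
    unfolding Zfun_exchangeable
    by (subst R(6)) (use R(1-3) assms(3) in \<open>simp add: a_def shifted_partition_insert numeral_2_eq_2\<close>)
  have "Pw E mu w (\<lambda>F. e \<in> F) * Pw E mu w (\<lambda>F. f \<in> F) - Pw E mu w (\<lambda>F. e \<in> F \<and> f \<in> F)
          = w e * w f / (Zfun E mu w)\<^sup>2 * ((a 1)\<^sup>2 - a 0 * a 2)"
    unfolding Pw_mem_exchangeable[OF assms(1)] Pw_mem_exchangeable[OF assms(2)]
      Pw_mem2_exchangeable[OF assms(1-3)] Pe Pf R_def[symmetric] a_def[symmetric]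
    using pair_covariance_identity[OF Z] assms(6) by (simp add: mult.commute)
  from sign_of_scaled_diff(1)[OF this] show ?thesis
    using assms(4-6) by (simp add: R_def a_def)
qed

lemma size_increasing_at_iff:
  assumes "e \<in> E" "0 < w e" "0 < Zfun E mu w"
  shows "Ew E mu w (\<lambda>F. real (card F)) * Pw E mu w (\<lambda>F. e \<in> F)
           < Ew E mu w (\<lambda>F. real (card F) * (if e \<in> F then 1 else 0))
     \<longleftrightarrow> shifted_partition (size_biased c) w (E - {e}) 0 * shifted_partition c w (E - {e}) 1
           < shifted_partition c w (E - {e}) 0 * shifted_partition (size_biased c) w (E - {e}) 1"
proof -
  define a where "a j = shifted_partition c w (E - {e}) j" for j
  define b where "b j = shifted_partition (size_biased c) w (E - {e}) j" for j
  have split: "shifted_partition d w E 0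
      = shifted_partition d w (E - {e}) 0 + w e * shifted_partition d w (E - {e}) 1" for d
    using shifted_partition_insert[of "E - {e}" e d w 0] fin by (simp add: insert_absorb assms(1))
  have Z: "Zfun E mu w = a 0 + w e * a 1"
    and B: "shifted_partition (size_biased c) w E 0 = b 0 + w e * b 1"
    unfolding Zfun_exchangeable a_def b_def split by simp_all
  have "Ew E mu w (\<lambda>F. real (card F) * (if e \<in> F then 1 else 0))
          - Ew E mu w (\<lambda>F. real (card F)) * Pw E mu w (\<lambda>F. e \<in> F)
          = w e / (Zfun E mu w)\<^sup>2 * (a 0 * b 1 - b 0 * a 1)"
    unfolding Ew_card_mem_exchangeable[OF assms(1)] Ew_card_exchangeable Pw_mem_exchangeable[OF assms(1)]
      a_def[symmetric] b_def[symmetric] B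
    using size_covariance_identity[OF Z] assms(3) by simp
  from sign_of_scaled_diff(2)[OF this] show ?thesis
    using assms(2,3) by (simp add: a_def b_def)
qed

context
  assumes c_nonneg: "\<forall>k. 0 \<le> c k" and c0: "0 < c 0"
begin

lemma rayleigh_exchangeable_iff:
  "rayleigh E mu \<longleftrightarrow> (\<forall>e\<in>E. \<forall>f\<in>E. e \<noteq> f \<longrightarrow> rayleigh_profile c (E - {e, f}))"
proof
  assume ray: "rayleigh E mu"
  show "\<forall>e\<in>E. \<forall>f\<in>E. e \<noteq> f \<longrightarrow> rayleigh_profile c (E - {e, f})"
    unfolding rayleigh_profile_def
  proof (intro ballI impI allI)
    fix e f and w :: "'a \<Rightarrow> real"
    assume ef: "e \<in> E" "f \<in> E" "e \<noteq> f" and w: "\<forall>r\<in>E - {e, f}. 0 < w r"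
    define v where "v r = (if r \<in> E - {e, f} then w r else 1)" for r
    have v: "\<forall>r\<in>E. 0 < v r" using w by (simp add: v_def)
    with ray ef have "Pw E mu v (\<lambda>F. e \<in> F \<and> f \<in> F) \<le> Pw E mu v (\<lambda>F. e \<in> F) * Pw E mu v (\<lambda>F. f \<in> F)"
      unfolding rayleigh_def by blast
    then have "shifted_partition c v (E - {e, f}) 0 * shifted_partition c v (E - {e, f}) 2
        \<le> (shifted_partition c v (E - {e, f}) 1)\<^sup>2"
      using Pw_pair_le_iff[OF ef _ _ Zfun_pos[OF c_nonneg c0 v]] v ef(1,2) by blast
    moreover have "shifted_partition c v (E - {e, f}) j = shifted_partition c w (E - {e, f}) j" for j
      by (rule shifted_partition_cong) (simp add: v_def)
    ultimately show "shifted_partition c w (E - {e, f}) 0 * shifted_partition c w (E - {e, f}) 2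
        \<le> (shifted_partition c w (E - {e, f}) 1)\<^sup>2" by simp
  qed
next
  assume "\<forall>e\<in>E. \<forall>f\<in>E. e \<noteq> f \<longrightarrow> rayleigh_profile c (E - {e, f})"
  then show "rayleigh E mu"
    unfolding rayleigh_def rayleigh_profile_def using Pw_pair_le_iff Zfun_pos[OF c_nonneg c0] by auto
qed

lemma size_increasing_exchangeable_iff:
  "size_increasing E mu \<longleftrightarrow>
     (\<forall>w :: 'a \<Rightarrow> real. (\<forall>r\<in>E. 0 < w r) \<longrightarrow> (\<forall>e\<in>E.
        shifted_partition (size_biased c) w (E - {e}) 0 * shifted_partition c w (E - {e}) 1
          < shifted_partition c w (E - {e}) 0 * shifted_partition (size_biased c) w (E - {e}) 1))"
  unfolding size_increasing_def using size_increasing_at_iff Zfun_pos[OF c_nonneg c0] by auto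

end

end

section \<open>Log-concave sequences\<close>

(* Log-concavity includes the absence of internal zeros: without it log_concave_cross fails
   (e.g. for 1, 0, 0, 1) and log-concavity is not preserved by a \<mapsto> a + t * shift a. *)
definition log_concave :: "(nat \<Rightarrow> real) \<Rightarrow> bool" where
  "log_concave a \<longleftrightarrow> (\<forall>j. 0 \<le> a j) \<and> (\<forall>j. a j * a (j + 2) \<le> (a (j + 1))\<^sup>2) \<and>
     (\<forall>i j k. i \<le> j \<and> j \<le> k \<and> 0 < a i \<and> 0 < a k \<longrightarrow> 0 < a j)"

lemma log_concaveD:
  assumes "log_concave a"
  shows "0 \<le> a j" "a j * a (j + 2) \<le> (a (j + 1))\<^sup>2"
    "i \<le> j \<Longrightarrow> j \<le> k \<Longrightarrow> 0 < a i \<Longrightarrow> 0 < a k \<Longrightarrow> 0 < a j"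
  using assms unfolding log_concave_def by blast+

lemma log_concave_cross:
  assumes "log_concave a"
  shows "a j * a (j + 3) \<le> a (j + 1) * a (j + 2)"
proof (cases "0 < a j \<and> 0 < a (j + 3)")
  case True
  have "0 < a (j + 1)" "0 < a (j + 2)"
    using True log_concaveD(3)[OF assms, of j _ "j + 3"] by simp_all
  then have pos: "0 < a (j + 1) * a (j + 2)" by simp
  have "a j * a (j + 2) \<le> (a (j + 1))\<^sup>2" "a (j + 1) * a (j + 3) \<le> (a (j + 2))\<^sup>2"
    using log_concaveD(2)[OF assms, of j] log_concaveD(2)[OF assms, of "j + 1"]
    by (simp_all add: numeral_3_eq_3 numeral_2_eq_2)
  then have "(a j * a (j + 2)) * (a (j + 1) * a (j + 3)) \<le> (a (j + 1))\<^sup>2 * (a (j + 2))\<^sup>2"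
    by (intro mult_mono) (simp_all add: log_concaveD(1)[OF assms])
  then have "(a j * a (j + 3)) * (a (j + 1) * a (j + 2)) \<le> (a (j + 1) * a (j + 2)) * (a (j + 1) * a (j + 2))"
    by (simp add: power2_eq_square ac_simps)
  then show ?thesis using pos by (rule mult_right_le_imp_le)
next
  case False
  then have "a j * a (j + 3) = 0"
    using log_concaveD(1)[OF assms] by (auto simp: order.strict_iff_order)
  moreover have "0 \<le> a (j + 1) * a (j + 2)"
    using log_concaveD(1)[OF assms] by simp
  ultimately show ?thesis by linarith
qed

lemma log_concave_add_shift:
  assumes "log_concave a" "0 \<le> t"
  shows "log_concave (\<lambda>j. a j + t * a (Suc j))"
proof -
  let ?b = "\<lambda>j. a j + t * a (Suc j)"
  note nonneg = log_concaveD(1)[OF assms(1)]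
  have "?b j * ?b (j + 2) \<le> (?b (j + 1))\<^sup>2" for j
  proof -
    have "(?b (j + 1))\<^sup>2 - ?b j * ?b (j + 2)
        = ((a (j + 1))\<^sup>2 - a j * a (j + 2)) + t * (a (j + 1) * a (j + 2) - a j * a (j + 3))
          + t\<^sup>2 * ((a (j + 2))\<^sup>2 - a (j + 1) * a (j + 3))"
      by (simp add: algebra_simps power2_eq_square numeral_3_eq_3)
    moreover have "a j * a (j + 2) \<le> (a (j + 1))\<^sup>2" "a (j + 1) * a (j + 3) \<le> (a (j + 2))\<^sup>2"
      using log_concaveD(2)[OF assms(1), of j] log_concaveD(2)[OF assms(1), of "j + 1"]
      by (simp_all add: numeral_3_eq_3 numeral_2_eq_2)
    moreover have "0 \<le> t * (a (j + 1) * a (j + 2) - a j * a (j + 3))"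
      using log_concave_cross[OF assms(1), of j] assms(2) by simp
    ultimately show ?thesis
      by (smt (verit) mult_nonneg_nonneg zero_le_power2)
  qed
  moreover have "0 < ?b j" if ij: "i \<le> j" and jk: "j \<le> k" and bi: "0 < ?b i" and bk: "0 < ?b k"
    for i j k
  proof (cases "i = j \<or> j = k")
    case True
    then show ?thesis using bi bk by auto
  next
    case False
    have support: "0 < a n \<or> 0 < a (Suc n)" if "0 < ?b n" for n
      using that nonneg[of n] nonneg[of "Suc n"] by force
    obtain i' where "i' \<le> j" "0 < a i'"
      using support[OF bi] ij False by (metis Suc_leI le_eq_less_or_eq)
    moreover obtain k' where "j \<le> k'" "0 < a k'"
      using support[OF bk] jk by (metis le_SucI)
    ultimately have "0 < a j" using log_concaveD(3)[OF assms(1)] by blast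
    then show ?thesis using nonneg[of "Suc j"] assms(2) by (simp add: add_pos_nonneg)
  qed
  ultimately show ?thesis
    using nonneg assms(2) by (auto simp: log_concave_def)
qed

lemma log_concave_shifted_partition:
  assumes "log_concave c" "finite R" "\<forall>r\<in>R. 0 < w r"
  shows "log_concave (shifted_partition c w R)"
  using assms(2,3)
proof (induction R rule: finite_induct)
  case empty
  then show ?case using assms(1) by (simp add: shifted_partition_def[abs_def])
next
  case (insert x R)
  then have "log_concave (\<lambda>j. shifted_partition c w R j + w x * shifted_partition c w R (Suc j))"
    by (intro log_concave_add_shift) auto
  then show ?case by (simp add: shifted_partition_insert[OF insert(1,2)])
qed

lemma cross_difference_add_shift:
  fixes a b :: "nat \<Rightarrow> real" and t :: real
  defines "G \<equiv> \<lambda>j d. b (j + d) * a j - b j * a (j + d)"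
  shows "(b (j + Suc d) + t * b (Suc (j + Suc d))) * (a j + t * a (Suc j))
           - (b j + t * b (Suc j)) * (a (j + Suc d) + t * a (Suc (j + Suc d)))
         = G j (Suc d) + t * (G j (Suc (Suc d)) + G (Suc j) d) + t\<^sup>2 * G (Suc j) (Suc d)"
  unfolding G_def by (simp add: algebra_simps power2_eq_square)

lemma shifted_partition_size_gap:
  assumes "finite R" "\<forall>r\<in>R. 0 < w r" "\<forall>k. 0 \<le> c k"
  shows "real d * c j * c (j + d)
           \<le> shifted_partition (size_biased c) w R (j + d) * shifted_partition c w R j
             - shifted_partition (size_biased c) w R j * shifted_partition c w R (j + d)"
  using assms(1,2)
proof (induction R arbitrary: j d rule: finite_induct)
  case empty
  then show ?case by (simp add: size_biased_def algebra_simps)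
next
  case (insert x R)
  define G where "G j d = shifted_partition (size_biased c) w R (j + d) * shifted_partition c w R j
    - shifted_partition (size_biased c) w R j * shifted_partition c w R (j + d)" for j d
  have IH: "real d * c j * c (j + d) \<le> G j d" for j d
    using insert by (simp add: G_def)
  have G_nonneg: "0 \<le> G j d" for j d
    using IH[of d j] assms(3) by (meson order_trans mult_nonneg_nonneg of_nat_0_le_iff)
  have "0 < w x" using insert.prems by simp
  show ?case
  proof (cases d)
    case 0
    then show ?thesis by simp
  next
    case (Suc d')
    have "shifted_partition (size_biased c) w (insert x R) (j + d) * shifted_partition c w (insert x R) j
            - shifted_partition (size_biased c) w (insert x R) j * shifted_partition c w (insert x R) (j + d)
          = G j d + w x * (G j (Suc d) + G (Suc j) d') + (w x)\<^sup>2 * G (Suc j) d"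
      unfolding shifted_partition_insert[OF insert.hyps] Suc G_def
      by (rule cross_difference_add_shift)
    moreover have "0 \<le> w x * (G j (Suc d) + G (Suc j) d') + (w x)\<^sup>2 * G (Suc j) d"
      using \<open>0 < w x\<close> G_nonneg by (simp add: add_nonneg_nonneg)
    ultimately show ?thesis using IH[of d j] by linarith
  qed
qed

section \<open>Degenerate weights\<close>

definition skew_degree :: "nat \<Rightarrow> 'a set \<Rightarrow> 'a set \<Rightarrow> nat" where
  "skew_degree A R1 F = A * card (R1 - F) + card (F - R1)"

(* x^(A |R1|) times the shifted partition function for the weights x^-A on R1 and x elsewhere
   (skew_sum_eq_shifted_partition); s lowers all exponents once they are known to be \<ge> s. *)
definition skew_sum :: "(nat \<Rightarrow> real) \<Rightarrow> 'a set \<Rightarrow> 'a set \<Rightarrow> nat \<Rightarrow> nat \<Rightarrow> nat \<Rightarrow> real \<Rightarrow> real" where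
  "skew_sum c R R1 A i s x = (\<Sum>F\<in>Pow R. c (card F + i) * x ^ (skew_degree A R1 F - s))"

lemma skew_degree_eq_0_iff:
  assumes "finite F" "finite R1" "1 \<le> A"
  shows "skew_degree A R1 F = 0 \<longleftrightarrow> F = R1"
  using assms by (auto simp: skew_degree_def card_eq_0_iff)

lemma skew_degree_superset:
  assumes "finite F" "R1 \<subseteq> F"
  shows "skew_degree A R1 F = card (F - R1)" "card F = card R1 + card (F - R1)"
proof -
  have "R1 - F = {}" using assms(2) by blast
  then show "skew_degree A R1 F = card (F - R1)" unfolding skew_degree_def by (simp only:) simp
  show "card F = card R1 + card (F - R1)"
    using assms by (simp add: card_Diff_subset card_mono finite_subset)
qed

lemma skew_degree_not_superset:
  assumes "finite R1" "\<not> R1 \<subseteq> F"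
  shows "A \<le> skew_degree A R1 F"
proof -
  have "1 \<le> card (R1 - F)" using assms by (simp add: Suc_leI card_gt_0_iff)
  then show ?thesis unfolding skew_degree_def by (metis le_add1 mult.right_neutral mult_le_mono2 order_trans)
qed

lemma skew_sum_eq_shifted_partition:
  assumes "finite R" "R1 \<subseteq> R" "0 < x"
  shows "x ^ (A * card R1) * shifted_partition c (\<lambda>r. if r \<in> R1 then 1 / x ^ A else x) R i
           = skew_sum c R R1 A i 0 x"
  unfolding shifted_partition_def skew_sum_def sum_distrib_left
proof (intro sum.cong refl)
  fix F assume "F \<in> Pow R"
  then have F: "finite F" "finite R1" using assms(1,2) by (auto intro: finite_subset)
  have "prod (\<lambda>r. if r \<in> R1 then 1 / x ^ A else x) F
      = (\<Prod>r\<in>F \<inter> R1. if r \<in> R1 then 1 / x ^ A else x) * (\<Prod>r\<in>F - R1. if r \<in> R1 then 1 / x ^ A else x)"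
    by (rule prod.Int_Diff[OF F(1)])
  also have "\<dots> = (\<Prod>r\<in>F \<inter> R1. 1 / x ^ A) * (\<Prod>r\<in>F - R1. x)"
    by (intro arg_cong2[where f = "(*)"] prod.cong) auto
  finally have "prod (\<lambda>r. if r \<in> R1 then 1 / x ^ A else x) F = (1 / x ^ A) ^ card (F \<inter> R1) * x ^ card (F - R1)"
    by simp
  moreover have "card R1 = card (F \<inter> R1) + card (R1 - F)"
    using card_Int_Diff[OF F(2), of F] by (simp add: Int_commute)
  moreover have "(x ^ A) ^ card (F \<inter> R1) * (1 / x ^ A) ^ card (F \<inter> R1) = 1"
    using assms(3) by (simp add: power_one_over flip: power_mult_distrib)
  ultimately have "x ^ (A * card R1) * prod (\<lambda>r. if r \<in> R1 then 1 / x ^ A else x) F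
      = x ^ skew_degree A R1 F"
    unfolding skew_degree_def by (simp add: power_add power_mult algebra_simps add_mult_distrib2)
  then show "x ^ (A * card R1) * (c (card F + i) * prod (\<lambda>r. if r \<in> R1 then 1 / x ^ A else x) F)
      = c (card F + i) * x ^ (skew_degree A R1 F - 0)"
    by (simp add: algebra_simps)
qed

lemma skew_sum_shift:
  assumes "\<forall>F\<in>Pow R. c (card F + i) \<noteq> 0 \<longrightarrow> s \<le> skew_degree A R1 F"
  shows "skew_sum c R R1 A i 0 x = x ^ s * skew_sum c R R1 A i s x"
  unfolding skew_sum_def sum_distrib_left
proof (intro sum.cong refl)
  fix F assume "F \<in> Pow R"
  then show "c (card F + i) * x ^ (skew_degree A R1 F - 0) = x ^ s * (c (card F + i) * x ^ (skew_degree A R1 F - s))"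
    using assms by (cases "c (card F + i) = 0") (auto simp flip: power_add)
qed

lemma skew_sum_at_zero:
  assumes "finite R" "R1 \<subseteq> R" "1 \<le> A"
  shows "skew_sum c R R1 A i 0 0 = c (card R1 + i)"
proof -
  have "skew_sum c R R1 A i 0 0 = (\<Sum>F\<in>Pow R. if F = R1 then c (card R1 + i) else 0)"
    unfolding skew_sum_def
  proof (intro sum.cong refl)
    fix F assume "F \<in> Pow R"
    then have "finite F" "finite R1" using assms(1,2) by (auto intro: finite_subset)
    then show "c (card F + i) * 0 ^ (skew_degree A R1 F - 0) = (if F = R1 then c (card R1 + i) else 0)"
      using skew_degree_eq_0_iff[OF _ _ assms(3), of F R1] by (auto simp: power_0_left)
  qed
  also have "\<dots> = c (card R1 + i)" using assms(1,2) by simp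
  finally show ?thesis .
qed

lemma skew_sum_ge_at_zero:
  assumes "finite R" "F0 \<subseteq> R" "skew_degree A R1 F0 = s" "\<forall>k. 0 \<le> c k"
  shows "c (card F0 + i) \<le> skew_sum c R R1 A i s 0"
proof -
  have "c (card F0 + i) * 0 ^ (skew_degree A R1 F0 - s) \<le> skew_sum c R R1 A i s 0"
    unfolding skew_sum_def
    by (rule member_le_sum) (use assms in \<open>auto simp: power_0_left\<close>)
  then show ?thesis using assms(3) by simp
qed

lemma continuous_skew_sum: "continuous_on UNIV (skew_sum c R R1 A i s)"
  unfolding skew_sum_def[abs_def] by (intro continuous_intros)

lemma continuous_nonneg_at_0:
  fixes g :: "real \<Rightarrow> real"
  assumes "continuous_on UNIV g" "\<And>x. 0 < x \<Longrightarrow> 0 \<le> g x"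
  shows "0 \<le> g 0"
proof (rule tendsto_lowerbound)
  show "(g \<longlongrightarrow> g 0) (at_right 0)"
    using assms(1) by (simp add: continuous_on_eq_continuous_at isCont_def filterlim_at_split)
  show "\<forall>\<^sub>F x in at_right 0. 0 \<le> g x"
    by (rule eventually_mono[OF eventually_at_right_less]) (use assms(2) in auto)
qed simp

lemma rayleigh_profile_skew_sum:
  assumes "rayleigh_profile c R" "finite R" "R1 \<subseteq> R" "0 < x"
  shows "skew_sum c R R1 A 0 0 x * skew_sum c R R1 A 2 0 x \<le> (skew_sum c R R1 A 1 0 x)\<^sup>2"
proof -
  define w where "w r = (if r \<in> R1 then 1 / x ^ A else x)" for r
  define q where "q = x ^ (A * card R1)"
  have T: "skew_sum c R R1 A i 0 x = q * shifted_partition c w R i" for i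
    unfolding w_def q_def by (rule skew_sum_eq_shifted_partition[OF assms(2-4), symmetric])
  have "\<forall>r\<in>R. 0 < w r" using assms(4) by (simp add: w_def)
  then have "shifted_partition c w R 0 * shifted_partition c w R 2 \<le> (shifted_partition c w R 1)\<^sup>2"
    using assms(1) by (simp add: rayleigh_profile_def)
  then have "q\<^sup>2 * (shifted_partition c w R 0 * shifted_partition c w R 2) \<le> q\<^sup>2 * (shifted_partition c w R 1)\<^sup>2"
    by (rule mult_left_mono) simp
  then show ?thesis
    unfolding T by (simp add: power2_eq_square ac_simps)
qed

lemma rayleigh_profile_log_concave_step:
  assumes "rayleigh_profile c R" "finite R" "n \<le> card R"
  shows "c n * c (n + 2) \<le> (c (n + 1))\<^sup>2"
proof -
  obtain R1 where R1: "R1 \<subseteq> R" "card R1 = n"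
    using obtain_subset_with_card_n[OF assms(3)] by blast
  let ?T = "\<lambda>i. skew_sum c R R1 1 i 0"
  have "0 \<le> (?T 1 0)\<^sup>2 - ?T 0 0 * ?T 2 0"
  proof (rule continuous_nonneg_at_0[where g = "\<lambda>x. (?T 1 x)\<^sup>2 - ?T 0 x * ?T 2 x"])
    show "continuous_on UNIV (\<lambda>x. (?T 1 x)\<^sup>2 - ?T 0 x * ?T 2 x)"
      by (intro continuous_intros continuous_skew_sum)
    show "0 \<le> (?T 1 x)\<^sup>2 - ?T 0 x * ?T 2 x" if "0 < x" for x
      using rayleigh_profile_skew_sum[OF assms(1,2) R1(1) that] by simp
  qed
  then show ?thesis
    using skew_sum_at_zero[OF assms(2) R1(1), of 1 c] R1(2) by (simp add: add.commute)
qed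

lemma skew_degree_ge_of_gap:
  assumes "finite F" "finite R1" "card R1 = n" "1 \<le> i" "c (card F + i) \<noteq> 0"
    and gap: "\<forall>t. n < t \<and> t < n + s + 2 \<longrightarrow> c t = 0"
  shows "s + 2 - i \<le> skew_degree (Suc s) R1 F"
proof (cases "R1 \<subseteq> F")
  case True
  then have "skew_degree (Suc s) R1 F = card (F - R1)" "card F = n + card (F - R1)"
    using skew_degree_superset[OF assms(1) True] assms(3) by simp_all
  moreover from this(2) have "\<not> card F + i < n + s + 2"
    using gap assms(4,5) by auto
  ultimately show ?thesis by linarith
next
  case False
  then show ?thesis using skew_degree_not_superset[OF assms(2) False, of "Suc s"] assms(4) by linarith
qed

lemma obtain_superset_with_skew_degree:
  assumes "finite R" "R1 \<subseteq> R" "card R1 + s \<le> card R"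
  obtains F0 where "F0 \<subseteq> R" "card F0 = card R1 + s" "skew_degree A R1 F0 = s"
proof -
  have "finite R1" using assms(2,1) by (rule finite_subset)
  then have "s \<le> card (R - R1)" using assms by (simp add: card_Diff_subset)
  then obtain G where G: "G \<subseteq> R - R1" "card G = s"
    using obtain_subset_with_card_n by blast
  have "finite G" "R1 \<inter> G = {}" using G(1) assms(1) by (auto intro: finite_subset)
  then have "card (R1 \<union> G) = card R1 + s" "R1 \<union> G - R1 = G"
    using G \<open>finite R1\<close> by (auto simp: card_Un_disjoint)
  moreover have "finite (R1 \<union> G)" "R1 \<union> G \<subseteq> R"
    using G \<open>finite G\<close> \<open>finite R1\<close> assms(2) by auto
  ultimately show ?thesis
    using that[of "R1 \<union> G"] skew_degree_superset(1)[of "R1 \<union> G" R1 A] G(2) by simp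
qed

(* With T_i = skew_sum c R R1 (s + 1) i, the gap makes T_1 divisible by x^(s+1) and T_2 by x^s;
   dividing T_0 T_2 \<le> T_1^2 by x^s and letting x \<rightarrow> 0 leaves c(n) U_2(0) \<le> 0 for the quotient
   U_2 = T_2 / x^s, while U_2(0) \<ge> c(n + s + 2) > 0. *)
lemma rayleigh_profile_no_gap:
  assumes "rayleigh_profile c R" "finite R" "\<forall>t. 0 \<le> c t" "n + s \<le> card R"
    and "0 < c n" "0 < c (n + s + 2)" and gap: "\<forall>t. n < t \<and> t < n + s + 2 \<longrightarrow> c t = 0"
  shows False
proof -
  obtain R1 where R1: "R1 \<subseteq> R" "card R1 = n"
    using obtain_subset_with_card_n[of n R] assms(4) by auto
  have "finite R1" using R1(1) assms(2) by (rule finite_subset)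
  let ?T = "skew_sum c R R1 (Suc s)"
  have degree: "s + 2 - i \<le> skew_degree (Suc s) R1 F" if "F \<in> Pow R" "1 \<le> i" "c (card F + i) \<noteq> 0" for F i
    using that assms(2) \<open>finite R1\<close> R1(2) gap by (intro skew_degree_ge_of_gap) (auto intro: finite_subset)
  have T1: "?T 1 0 x = x ^ (s + 1) * ?T 1 (s + 1) x" for x
    by (rule skew_sum_shift) (use degree[of _ 1] in simp)
  have T2: "?T 2 0 x = x ^ s * ?T 2 s x" for x
    by (rule skew_sum_shift) (use degree[of _ 2] in simp)
  have "0 \<le> 0 ^ (s + 2) * (?T 1 (s + 1) 0)\<^sup>2 - ?T 0 0 0 * ?T 2 s 0"
  proof (rule continuous_nonneg_at_0[where g = "\<lambda>x. x ^ (s + 2) * (?T 1 (s + 1) x)\<^sup>2 - ?T 0 0 x * ?T 2 s x"])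
    show "continuous_on UNIV (\<lambda>x. x ^ (s + 2) * (?T 1 (s + 1) x)\<^sup>2 - ?T 0 0 x * ?T 2 s x)"
      by (intro continuous_intros continuous_skew_sum)
    fix x :: real assume "0 < x"
    have "x ^ s * (?T 0 0 x * ?T 2 s x) \<le> x ^ s * (x ^ (s + 2) * (?T 1 (s + 1) x)\<^sup>2)"
      using rayleigh_profile_skew_sum[OF assms(1,2) R1(1) \<open>0 < x\<close>, of "Suc s"]
      unfolding T1 T2 by (simp add: power2_eq_square power_add ac_simps)
    then show "0 \<le> x ^ (s + 2) * (?T 1 (s + 1) x)\<^sup>2 - ?T 0 0 x * ?T 2 s x"
      using \<open>0 < x\<close> by simp
  qed
  moreover have "?T 0 0 0 = c n"
    using skew_sum_at_zero[OF assms(2) R1(1), of "Suc s" c 0] R1(2) by simp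
  moreover obtain F0 where "F0 \<subseteq> R" "card F0 = n + s" "skew_degree (Suc s) R1 F0 = s"
    using obtain_superset_with_skew_degree[OF assms(2) R1(1)] R1(2) assms(4) by metis
  then have "c (n + s + 2) \<le> ?T 2 s 0"
    using skew_sum_ge_at_zero[OF assms(2) _ _ assms(3), of F0 "Suc s" R1 s 2] by simp
  then have "0 < c n * ?T 2 s 0" using assms(5,6) by simp
  ultimately show False by simp
qed

lemma maximal_zero_run:
  fixes a :: "nat \<Rightarrow> real"
  assumes "i \<le> j" "j \<le> k" "0 < a i" "0 < a k" "\<not> 0 < a j"
  obtains n l where "n < j" "j < l" "l \<le> k" "0 < a n" "0 < a l"
    "\<And>t. n < t \<Longrightarrow> t < l \<Longrightarrow> \<not> 0 < a t"
proof
  let ?P = "\<lambda>t. t \<le> j \<and> 0 < a t" and ?Q = "\<lambda>t. j \<le> t \<and> 0 < a t"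
  have P: "?P (Greatest ?P)" and le_n: "\<And>t. ?P t \<Longrightarrow> t \<le> Greatest ?P"
    using GreatestI_nat[of ?P i j] Greatest_le_nat[of ?P _ j] assms(1,3) by auto
  have Q: "?Q (Least ?Q)" and le_l: "Least ?Q \<le> k"
    using LeastI[of ?Q k] Least_le[of ?Q k] assms(2,4) by auto
  show "Greatest ?P < j" "0 < a (Greatest ?P)" using P assms(5) by (auto simp: order.strict_iff_order)
  show "j < Least ?Q" "Least ?Q \<le> k" "0 < a (Least ?Q)" using Q le_l assms(5) by (auto simp: order.strict_iff_order)
  show "\<not> 0 < a t" if "Greatest ?P < t" "t < Least ?Q" for t
    using le_n[of t] not_less_Least[OF that(2)] that(1) by fastforce
qed

lemma obtain_two_distinct:
  assumes "finite E" "2 \<le> card E"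
  obtains e f where "e \<in> E" "f \<in> E" "e \<noteq> f" "card (E - {e, f}) = card E - 2"
proof -
  obtain T where "T \<subseteq> E" "card T = 2" using obtain_subset_with_card_n[OF assms(2)] by blast
  then obtain e f where "e \<in> E" "f \<in> E" "e \<noteq> f" by (auto simp: card_2_iff)
  then show ?thesis using that assms(1) by (simp add: card_Diff_subset)
qed

lemma log_concave_of_rayleigh_profiles:
  assumes "finite E" "\<forall>k. 0 \<le> c k" "\<forall>k. card E < k \<longrightarrow> c k = 0"
    and ray: "\<forall>e\<in>E. \<forall>f\<in>E. e \<noteq> f \<longrightarrow> rayleigh_profile c (E - {e, f})"
  shows "log_concave c"
  unfolding log_concave_def
proof (intro conjI allI impI)
  show "0 \<le> c k" for k using assms(2) by simp
  show "c j * c (j + 2) \<le> (c (j + 1))\<^sup>2" for j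
  proof (cases "j + 2 \<le> card E")
    case True
    then obtain e f where "e \<in> E" "f \<in> E" "e \<noteq> f" "card (E - {e, f}) = card E - 2"
      using obtain_two_distinct[OF assms(1)] by auto
    then show ?thesis
      using True ray assms(1) by (intro rayleigh_profile_log_concave_step[of c "E - {e, f}"]) auto
  next
    case False
    then show ?thesis using assms(3) by simp
  qed
  show "0 < c j" if "i \<le> j \<and> j \<le> k \<and> 0 < c i \<and> 0 < c k" for i j k
  proof (rule ccontr)
    assume "\<not> 0 < c j"
    with that obtain n l where run: "n < j" "j < l" "l \<le> k" "0 < c n" "0 < c l"
      "\<And>t. n < t \<Longrightarrow> t < l \<Longrightarrow> \<not> 0 < c t"
      using maximal_zero_run[of i j k c] by blast
    have "k \<le> card E" using that assms(3) by (metis less_irrefl not_le)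
    then have "2 \<le> card E" using run(1-3) by linarith
    then obtain e f where ef: "e \<in> E" "f \<in> E" "e \<noteq> f" "card (E - {e, f}) = card E - 2"
      by (rule obtain_two_distinct[OF assms(1)])
    define s where "s = l - (n + 2)"
    have l: "l = n + s + 2" using run(1,2) unfolding s_def by linarith
    show False
    proof (rule rayleigh_profile_no_gap[of c "E - {e, f}" n s])
      show "rayleigh_profile c (E - {e, f})" using ray ef(1-3) by blast
      show "n + s \<le> card (E - {e, f})" using run(3) ef(4) l \<open>k \<le> card E\<close> by linarith
      show "0 < c (n + s + 2)" using run(5) unfolding l .
      show "\<forall>t. n < t \<and> t < n + s + 2 \<longrightarrow> c t = 0"
        using run(6) assms(2) unfolding l by (metis antisym not_le)
    qed (use assms(1,2) run(4) in auto)
  qed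
qed

lemma rayleigh_profile_of_log_concave:
  assumes "log_concave c" "finite R"
  shows "rayleigh_profile c R"
  unfolding rayleigh_profile_def
proof (intro allI impI)
  fix w :: "'a \<Rightarrow> real" assume "\<forall>r\<in>R. 0 < w r"
  from log_concaveD(2)[OF log_concave_shifted_partition[OF assms this], of 0]
  show "shifted_partition c w R 0 * shifted_partition c w R 2 \<le> (shifted_partition c w R 1)\<^sup>2"
    by (simp add: numeral_2_eq_2)
qed

lemma size_increasing_exchangeable:
  assumes "exchangeable E mu c" "finite E" "\<forall>k. 0 \<le> c k" "0 < c 0" "0 < c 1"
  shows "size_increasing E mu"
  unfolding size_increasing_exchangeable_iff[OF assms(1-4)]
proof (intro allI impI ballI)
  fix w :: "'a \<Rightarrow> real" and e assume "\<forall>r\<in>E. 0 < w r" "e \<in> E"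
  then have "real 1 * c 0 * c (0 + 1)
      \<le> shifted_partition (size_biased c) w (E - {e}) (0 + 1) * shifted_partition c w (E - {e}) 0
        - shifted_partition (size_biased c) w (E - {e}) 0 * shifted_partition c w (E - {e}) (0 + 1)"
    using assms(2,3) by (intro shifted_partition_size_gap) auto
  moreover have "0 < c 0 * c 1" using assms(4,5) by simp
  ultimately show "shifted_partition (size_biased c) w (E - {e}) 0 * shifted_partition c w (E - {e}) 1
      < shifted_partition c w (E - {e}) 0 * shifted_partition (size_biased c) w (E - {e}) 1"
    by (simp add: mult.commute)
qed

lemma pos_1_of_size_increasing:
  assumes "exchangeable E mu c" "finite E" "E \<noteq> {}" "\<forall>k. 0 \<le> c k" "0 < c 0"
    and "log_concave c" "size_increasing E mu"
  shows "0 < c 1"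
proof (rule ccontr)
  assume "\<not> 0 < c 1"
  then have "\<not> 0 < c (Suc t)" for t
    using log_concaveD(3)[OF assms(6), of 0 1 "Suc t"] assms(5) by auto
  then have "c (Suc t) = 0" for t
    using assms(4) by (meson antisym not_le)
  then have vanish: "shifted_partition c w R (Suc j) = 0"
    "shifted_partition (size_biased c) w R (Suc j) = 0" for w :: "'a \<Rightarrow> real" and R j
    by (simp_all add: shifted_partition_def size_biased_def)
  obtain e where "e \<in> E" using assms(3) by blast
  with assms(7) show False
    using size_increasing_exchangeable_iff[OF assms(1,2,4,5)]
    by (auto dest!: spec[of _ "\<lambda>_. 1"] simp: vanish)
qed

theorem cavity_monotone_exchangeable_iff:
  assumes exch: "exchangeable E mu c" and fin: "finite E" and "E \<noteq> {}"
    and nonneg: "\<forall>k. 0 \<le> c k" and vanish: "\<forall>k. card E < k \<longrightarrow> c k = 0"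
  shows "cavity_monotone E mu \<longleftrightarrow> log_concave c \<and> 0 < c 0 \<and> 0 < c 1"
proof
  assume cm: "cavity_monotone E mu"
  have c0: "0 < c 0" using cm exch by (simp add: cavity_monotone_def exchangeable_def)
  have lc: "log_concave c"
    using log_concave_of_rayleigh_profiles[OF fin nonneg vanish] cm
      rayleigh_exchangeable_iff[OF exch fin nonneg c0] by (simp add: cavity_monotone_def)
  moreover have "0 < c 1"
    using pos_1_of_size_increasing[OF exch fin assms(3) nonneg c0 lc] cm
    by (simp add: cavity_monotone_def)
  ultimately show "log_concave c \<and> 0 < c 0 \<and> 0 < c 1" using c0 by simp
next
  assume "log_concave c \<and> 0 < c 0 \<and> 0 < c 1"
  then have lc: "log_concave c" and c0: "0 < c 0" and c1: "0 < c 1" by simp_all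
  have "rayleigh E mu"
    unfolding rayleigh_exchangeable_iff[OF exch fin nonneg c0]
    using fin by (simp add: rayleigh_profile_of_log_concave[OF lc])
  moreover have "0 < mu {}" using exch c0 by (simp add: exchangeable_def)
  ultimately show "cavity_monotone E mu"
    using size_increasing_exchangeable[OF exch fin nonneg c0 c1] by (simp add: cavity_monotone_def)
qed

lemma log_concave_truncation_iff:
  assumes "\<forall>k\<le>m. 0 \<le> c k"
  shows "log_concave (\<lambda>k. if k \<le> m then c k else 0) \<longleftrightarrow>
    (\<forall>k. 0 < k \<and> k < m \<longrightarrow> c (k - 1) * c (k + 1) \<le> (c k)\<^sup>2) \<and>
    (\<forall>i j k. i \<le> j \<and> j \<le> k \<and> k \<le> m \<and> 0 < c i \<and> 0 < c k \<longrightarrow> 0 < c j)"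
  (is "log_concave ?c \<longleftrightarrow> ?lc \<and> ?iv")
proof
  assume lc: "log_concave ?c"
  have "c (k - 1) * c (k + 1) \<le> (c k)\<^sup>2" if "0 < k" "k < m" for k
    using log_concaveD(2)[OF lc, of "k - 1"] that by (cases k) (simp_all add: numeral_2_eq_2)
  moreover have "0 < c j" if "i \<le> j" "j \<le> k" "k \<le> m" "0 < c i" "0 < c k" for i j k
    using log_concaveD(3)[OF lc, of i j k] that by simp
  ultimately show "?lc \<and> ?iv" by blast
next
  assume "?lc \<and> ?iv"
  then have lc: "?lc" and iv: "?iv" by blast+
  have "?c j * ?c (j + 2) \<le> (?c (j + 1))\<^sup>2" for j
    using lc[rule_format, of "j + 1"] by (cases "j + 2 \<le> m") (simp_all add: numeral_2_eq_2)
  moreover have "0 < ?c j" if "i \<le> j" "j \<le> k" "0 < ?c i" "0 < ?c k" for i j k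
  proof -
    have "k \<le> m" "0 < c i" "0 < c k" using that(3,4) by (auto split: if_splits)
    then show ?thesis using iv[rule_format, of i j k] that(1,2) by simp
  qed
  moreover have "0 \<le> ?c j" for j using assms by simp
  ultimately show "log_concave ?c" unfolding log_concave_def by blast
qed

corollary cavity_monotone_size_bounded:
  assumes "finite E" "E \<noteq> {}" "1 \<le> b"
  shows "cavity_monotone E (\<lambda>F. if card F \<le> b then 1 else 0)"
proof -
  define c :: "nat \<Rightarrow> real" where "c k = (if k \<le> min b (card E) then 1 else 0)" for k
  have "exchangeable E (\<lambda>F. if card F \<le> b then 1 else 0) c"
    using card_mono[OF assms(1)] by (auto simp: exchangeable_def c_def)
  moreover have "log_concave c" by (auto simp: log_concave_def c_def)
  moreover have "0 < c 0" "0 < c 1"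
    using assms by (simp_all add: c_def Suc_leI card_gt_0_iff)
  ultimately show ?thesis
    using cavity_monotone_exchangeable_iff[of E _ c] assms(1,2) by (simp add: c_def)
qed

theorem mainTheorem3:
  fixes E :: "'a set" and mu :: "'a set \<Rightarrow> real" and c :: "nat \<Rightarrow> real" and m :: nat
  assumes "finite E" and "m = card E" and "m \<ge> 1"
    and "\<And>k. k \<le> m \<Longrightarrow> c k \<ge> 0"
    and "\<And>F. F \<subseteq> E \<Longrightarrow> mu F = c (card F)"
  shows "(cavity_monotone E mu \<longleftrightarrow>
           ((\<forall>k. 0 < k \<and> k < m \<longrightarrow> (c k)\<^sup>2 \<ge> c (k - 1) * c (k + 1)) \<and>
            (let S = {k. k \<le> m \<and> c k > 0} in
               0 \<in> S \<and> 1 \<in> S \<and> (\<forall>i j k. i \<in> S \<and> k \<in> S \<and> i \<le> j \<and> j \<le> k \<longrightarrow> j \<in> S))))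
         \<and> (\<forall>b::nat. b \<ge> 1 \<longrightarrow> cavity_monotone E (\<lambda>F. if card F \<le> b then 1 else 0))"
proof -
  define c' where "c' = (\<lambda>k. if k \<le> m then c k else 0)"
  have "E \<noteq> {}" using assms(2,3) by auto
  have "exchangeable E mu c'"
    using assms(2,5) card_mono[OF assms(1)] by (simp add: exchangeable_def c'_def)
  then have "cavity_monotone E mu \<longleftrightarrow> log_concave c' \<and> 0 < c' 0 \<and> 0 < c' 1"
    using cavity_monotone_exchangeable_iff[OF _ assms(1) \<open>E \<noteq> {}\<close>] assms(2,4)
    by (simp add: c'_def)
  also have "\<dots> \<longleftrightarrow> (\<forall>k. 0 < k \<and> k < m \<longrightarrow> c (k - 1) * c (k + 1) \<le> (c k)\<^sup>2) \<and>
      (\<forall>i j k. i \<le> j \<and> j \<le> k \<and> k \<le> m \<and> 0 < c i \<and> 0 < c k \<longrightarrow> 0 < c j) \<and> 0 < c 0 \<and> 0 < c 1"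
    using log_concave_truncation_iff[of m c] assms(3,4) by (simp add: c'_def)
  also have "\<dots> \<longleftrightarrow> (\<forall>k. 0 < k \<and> k < m \<longrightarrow> (c k)\<^sup>2 \<ge> c (k - 1) * c (k + 1)) \<and>
      (let S = {k. k \<le> m \<and> c k > 0} in
         0 \<in> S \<and> 1 \<in> S \<and> (\<forall>i j k. i \<in> S \<and> k \<in> S \<and> i \<le> j \<and> j \<le> k \<longrightarrow> j \<in> S))"
    unfolding Let_def mem_Collect_eq using assms(3) by (meson order_trans zero_le)
  finally show ?thesis
    using cavity_monotone_size_bounded[OF assms(1) \<open>E \<noteq> {}\<close>] by (intro conjI allI impI)
qed

end
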